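(* The cluster numbers $s_{n,k}$ for the consecutive pattern $14523$ satisfy the recurrence \[s_{n,k} = \sum_{\ell:\ 5 \leq 3\ell+2 \leq n} \binom{n-\ell-2}{2\ell}\,(2\ell-1)!!\; s_{n-3\ell-1,\,k-\ell} \quad \text{for } n\geq 5,\] with the initial conditions $s_{n,k}=0$ for $n<5$, except $s_{1,0}=1$.
   Context: For a consecutive pattern $\sigma$ of length $m$ (here $\sigma=14523$, $m=5$): an occurrence of $\sigma$ in a permutation is a block of $m$ consecutive positions whose entries are in the same relative order as $\sigma$. A $k$-cluster of length $n\ge m$ is a permutation of $\{1,\dots,n\}$ containing precisely $k$ occurrences of $\sigma$, such that every entry belongs to at least one occurrence and any two successive occurrences overlap in at least one position. $s_{n,k}$ is the number of $k$-clusters of length $n$. $(2\ell-1)!!=1\cdot3\cdot5\cdots(2\ell-1)$. *)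

theory Defs
  imports Main
begin

definition sigma :: "nat list" where
  "sigma = [1, 4, 5, 2, 3]"

text \<open>A permutation of {1..n} is represented as a list p of length n
  (entry at position j is p ! j, positions 0-based).\<close>
definition is_perm :: "nat \<Rightarrow> nat list \<Rightarrow> bool" where
  "is_perm n p \<longleftrightarrow> length p = n \<and> distinct p \<and> set p = {1..n}"

definition occ_at :: "nat list \<Rightarrow> nat \<Rightarrow> bool" where
  "occ_at p i \<longleftrightarrow> i + length sigma \<le> length p \<and>
     (\<forall>a < length sigma. \<forall>b < length sigma.
        (p ! (i + a) < p ! (i + b)) \<longleftrightarrow> (sigma ! a < sigma ! b))"

definition occs :: "nat list \<Rightarrow> nat set" where
  "occs p = {i. occ_at p i}"

definition is_cluster :: "nat \<Rightarrow> nat \<Rightarrow> nat list \<Rightarrow> bool" where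
  "is_cluster n k p \<longleftrightarrow>
     n \<ge> length sigma \<and> is_perm n p \<and> card (occs p) = k \<and>
     (\<forall>j < n. \<exists>i \<in> occs p. i \<le> j \<and> j < i + length sigma) \<and>
     (\<forall>i \<in> occs p. \<forall>i' \<in> occs p.
        i < i' \<and> (\<forall>t. i < t \<and> t < i' \<longrightarrow> t \<notin> occs p) \<longrightarrow> i' < i + length sigma)"

definition s :: "nat \<Rightarrow> nat \<Rightarrow> nat" where
  "s n k = (if n = 1 \<and> k = 0 then 1 else card {p. is_cluster n k p})"

definition dfact_odd :: "nat \<Rightarrow> nat" where
  "dfact_odd l = (\<Prod>i<l. 2 * i + 1)"

end

theory Submission
  imports Defs
begin

text \<open>Occurrences of 14523 cannot overlap in three or four letters, so consecutive occurrences
  in a cluster are 3 or 4 positions apart. Hence a k-cluster begins with a maximal run of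
  l \<ge> 1 occurrences at positions 0, 3, ..., 3(l-1), followed by a (k-l)-cluster starting at
  position 3l+1, or by a single last letter when k = l. The pattern forces the letters at
  positions 0, 3, ..., 3l to be 1, ..., l+1 and the first letter of the tail, its minimum, to
  be l+2. The letters at positions 3j+1 and 3j+2 form pairs b_j < c_j with
  b_0 > b_1 > ... > b_{l-1}, that is, a perfect matching of a 2l-element subset of
  {l+3, ..., n}: there are (n-l-2 choose 2l) such subsets with (2l-1)!! matchings each, and
  the tail is an arbitrary (k-l)-cluster on the remaining n-3l-1 values.\<close>

section \<open>Occurrences of the pattern\<close>

lemma occ_at_iff:
  "occ_at p i \<longleftrightarrow> i + 5 \<le> length p \<and> p!i < p!(i+3) \<and> p!(i+3) < p!(i+4)
     \<and> p!(i+4) < p!(i+1) \<and> p!(i+1) < p!(i+2)"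
  unfolding occ_at_def sigma_def
  by (auto simp: numeral_eq_Suc All_less_Suc)

lemma occ_at_drop: "occ_at (drop d p) i \<longleftrightarrow> occ_at p (i + d)"
  by (cases "d \<le> length p") (auto simp: occ_at_iff add_ac)

lemma occ_at_length: "occ_at p i \<Longrightarrow> i + 5 \<le> length p"
  by (simp add: occ_at_iff)

lemma not_occ_at_Suc: "occ_at p i \<Longrightarrow> \<not> occ_at p (Suc i)"
  by (simp add: occ_at_iff add_ac)

lemma not_occ_at_Suc_Suc: "occ_at p i \<Longrightarrow> \<not> occ_at p (Suc (Suc i))"
  by (simp add: occ_at_iff numeral_eq_Suc)

lemma occ_at_map:
  assumes "strict_mono_on A f" and "set p \<subseteq> A"
  shows "occ_at (map f p) i \<longleftrightarrow> occ_at p i"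
proof -
  have "f (p!a) < f (p!b) \<longleftrightarrow> p!a < p!b" if "a < length p" "b < length p" for a b
    using strict_mono_on_less[OF assms(1)] assms(2) that nth_mem by blast
  then show ?thesis
    unfolding occ_at_iff by (cases "i + 5 \<le> length p") auto
qed

lemma finite_occs: "finite (occs p)"
  by (rule finite_subset[of _ "{..<length p}"]) (auto simp: occs_def dest: occ_at_length)

lemma occs_drop: "i \<in> occs (drop d p) \<longleftrightarrow> i + d \<in> occs p"
  by (simp add: occs_def occ_at_drop)

lemma occs_map: "strict_mono_on A f \<Longrightarrow> set p \<subseteq> A \<Longrightarrow> occs (map f p) = occs p"
  by (simp add: occs_def occ_at_map)

section \<open>Clusters as chains of occurrences\<close>

definition occs_cover :: "nat list \<Rightarrow> bool" where
  "occs_cover p \<longleftrightarrow> (\<forall>j < length p. \<exists>i \<in> occs p. i \<le> j \<and> j < i + 5)"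

definition occs_linked :: "nat list \<Rightarrow> bool" where
  "occs_linked p \<longleftrightarrow> (\<forall>i \<in> occs p. \<forall>i' \<in> occs p.
     i < i' \<and> (\<forall>t. i < t \<and> t < i' \<longrightarrow> t \<notin> occs p) \<longrightarrow> i' < i + 5)"

definition is_cluster_word :: "nat \<Rightarrow> nat list \<Rightarrow> bool" where
  "is_cluster_word k p \<longleftrightarrow> 5 \<le> length p \<and> card (occs p) = k \<and> occs_cover p \<and> occs_linked p"

lemma is_cluster_iff: "is_cluster n k p \<longleftrightarrow> is_perm n p \<and> is_cluster_word k p"
proof -
  have "length sigma = 5" by (simp add: sigma_def)
  then show ?thesis
    unfolding is_cluster_def is_cluster_word_def occs_cover_def occs_linked_def is_perm_def
    by auto
qed

lemma is_cluster_word_map: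
  "strict_mono_on A f \<Longrightarrow> set p \<subseteq> A \<Longrightarrow> is_cluster_word k (map f p) \<longleftrightarrow> is_cluster_word k p"
  by (simp add: is_cluster_word_def occs_cover_def occs_linked_def occs_map)

context
  fixes p :: "nat list" and d :: nat
  assumes occ_0: "0 \<in> occs p" and occ_d: "d \<in> occs p" and d_bounds: "0 < d" "d < 5"
    and gap: "\<forall>t. 0 < t \<and> t < d \<longrightarrow> t \<notin> occs p"
begin

lemma occs_eq_insert_shift: "occs p = insert 0 ((\<lambda>i. i + d) ` occs (drop d p))"
proof (intro set_eqI iffI)
  fix i assume "i \<in> occs p"
  then have "i = 0 \<or> (i - d) + d = i \<and> i - d \<in> occs (drop d p)"
    using gap occs_drop[of "i - d" d p] by (cases "i < d") auto
  then show "i \<in> insert 0 ((\<lambda>i. i + d) ` occs (drop d p))" by force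
qed (use occ_0 occs_drop in auto)

lemma card_occs_shift: "card (occs p) = Suc (card (occs (drop d p)))"
  unfolding occs_eq_insert_shift using finite_occs d_bounds
  by (subst card_insert_disjoint) (auto simp: card_image inj_on_def)

lemma occs_cover_shift_iff: "occs_cover p \<longleftrightarrow> occs_cover (drop d p)"
proof
  assume cover: "occs_cover p"
  show "occs_cover (drop d p)"
    unfolding occs_cover_def
  proof (intro allI impI)
    fix j assume "j < length (drop d p)"
    then obtain i where i: "i \<in> occs p" "i \<le> j + d" "j + d < i + 5"
      using cover unfolding occs_cover_def by (metis add.commute length_drop less_diff_conv)
    show "\<exists>i \<in> occs (drop d p). i \<le> j \<and> j < i + 5"
    proof (cases "i = 0")
      case True
      then show ?thesis using i occ_d occs_drop[of 0 d p] by (intro bexI[of _ 0]) auto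
    next
      case False
      then have "d \<le> i" using gap i(1) by (meson not_less neq0_conv)
      then show ?thesis using i occs_drop[of "i - d" d p] by (intro bexI[of _ "i - d"]) auto
    qed
  qed
next
  assume cover: "occs_cover (drop d p)"
  show "occs_cover p"
    unfolding occs_cover_def
  proof (intro allI impI)
    fix j assume j: "j < length p"
    show "\<exists>i \<in> occs p. i \<le> j \<and> j < i + 5"
    proof (cases "j < 5")
      case True
      then show ?thesis using occ_0 by auto
    next
      case False
      then obtain i where "i \<in> occs (drop d p)" "i \<le> j - d" "j - d < i + 5"
        using cover j d_bounds unfolding occs_cover_def
        by (metis length_drop diff_less_mono not_less order.strict_trans)
      then show ?thesis using False d_bounds occs_drop[of i d p] by (intro bexI[of _ "i + d"]) auto
    qed
  qed
qed

lemma occs_linked_shift_iff: "occs_linked p \<longleftrightarrow> occs_linked (drop d p)"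
proof
  assume linked: "occs_linked p"
  show "occs_linked (drop d p)"
    unfolding occs_linked_def
  proof (intro ballI impI)
    fix i i' assume "i \<in> occs (drop d p)" "i' \<in> occs (drop d p)"
      and next_occ: "i < i' \<and> (\<forall>t. i < t \<and> t < i' \<longrightarrow> t \<notin> occs (drop d p))"
    moreover have "t \<notin> occs p" if "i + d < t" "t < i' + d" for t
    proof -
      have "i < t - d" "t - d < i'" "t - d + d = t" using that by auto
      then show ?thesis using next_occ occs_drop[of "t - d" d p] by auto
    qed
    ultimately have "i' + d < i + d + 5"
      using linked unfolding occs_linked_def occs_drop by (metis add_less_mono1)
    then show "i' < i + 5" by simp
  qed
next
  assume linked: "occs_linked (drop d p)"
  show "occs_linked p"
    unfolding occs_linked_def
  proof (intro ballI impI)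
    fix i i' assume ii': "i \<in> occs p" "i' \<in> occs p"
      and next_occ: "i < i' \<and> (\<forall>t. i < t \<and> t < i' \<longrightarrow> t \<notin> occs p)"
    show "i' < i + 5"
    proof (cases "i = 0")
      case True
      then have "i' \<le> d" using next_occ occ_d d_bounds by (meson not_less)
      then show ?thesis using True d_bounds by simp
    next
      case False
      then obtain a a' where a: "a \<in> occs (drop d p)" "i = a + d"
        and a': "a' \<in> occs (drop d p)" "i' = a' + d"
        using ii' next_occ occs_eq_insert_shift by auto
      moreover have "t \<notin> occs (drop d p)" if "a < t" "t < a'" for t
        using next_occ that a a' occs_drop[of t d p] by simp
      ultimately have "a' < a + 5"
        using linked next_occ unfolding occs_linked_def by simp
      then show ?thesis using a a' by simp
    qed
  qed
qed

lemma is_cluster_word_shift_iff: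
  "is_cluster_word (Suc k) p \<longleftrightarrow> is_cluster_word k (drop d p)"
proof -
  have "5 \<le> length p" "5 \<le> length (drop d p)"
    using occ_0 occ_d occ_at_length[of p d] occ_at_length[of p 0] by (auto simp: occs_def)
  then show ?thesis
    unfolding is_cluster_word_def
    using card_occs_shift occs_cover_shift_iff occs_linked_shift_iff by auto
qed

end

inductive occ_chain :: "nat list \<Rightarrow> nat \<Rightarrow> bool" where
  single: "length p = 5 \<Longrightarrow> occ_at p 0 \<Longrightarrow> occ_chain p 1"
| shift: "occ_at p 0 \<Longrightarrow> d = 3 \<or> d = 4 \<Longrightarrow> occ_chain (drop d p) k \<Longrightarrow> occ_chain p (Suc k)"

lemma occ_chain_occ_at_0: "occ_chain p k \<Longrightarrow> occ_at p 0"
  by (induction rule: occ_chain.induct) auto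

lemma occs_gap:
  assumes "occ_at p 0" "occ_at p d" "d = 3 \<or> d = 4"
  shows "\<forall>t. 0 < t \<and> t < d \<longrightarrow> t \<notin> occs p"
  using assms not_occ_at_Suc[of p 0] not_occ_at_Suc_Suc[of p 0] not_occ_at_Suc[of p 3]
  by (auto simp: occs_def numeral_eq_Suc less_Suc_eq)

lemma occ_chain_imp_is_cluster_word: "occ_chain p k \<Longrightarrow> is_cluster_word k p"
proof (induction rule: occ_chain.induct)
  case (single p)
  then have "occs p = {0}" by (fastforce simp: occs_def dest: occ_at_length)
  then show ?case using single by (auto simp: is_cluster_word_def occs_cover_def occs_linked_def)
next
  case (shift p d k)
  have "occ_at p d" using occ_chain_occ_at_0[OF shift.hyps(3)] occ_at_drop[of d p 0] by simp
  then show ?case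
    using is_cluster_word_shift_iff[of p d] occs_gap[of p d] shift by (auto simp: occs_def)
qed

lemma is_cluster_word_imp_occ_chain: "is_cluster_word k p \<Longrightarrow> occ_chain p k"
proof (induction "length p" arbitrary: p k rule: less_induct)
  case less
  have occ_0: "0 \<in> occs p" and len: "5 \<le> length p"
    using less.prems by (force simp: is_cluster_word_def occs_cover_def)+
  show ?case
  proof (cases "occs p = {0}")
    case True
    have "length p - 1 < 5"
    proof -
      obtain i where "i \<in> occs p" "length p - 1 < i + 5"
        using less.prems len unfolding is_cluster_word_def occs_cover_def
        by (meson diff_less less_le_trans zero_less_one zero_less_numeral)
      then show ?thesis using True by simp
    qed
    then have "length p = 5" using len by simp
    moreover have "k = 1" using less.prems True by (simp add: is_cluster_word_def)
    ultimately show ?thesis using occ_0 occ_chain.single by (simp add: occs_def)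
  next
    case False
    define d where "d = Min (occs p - {0})"
    have fin: "finite (occs p - {0})" and ne: "occs p - {0} \<noteq> {}"
      using False occ_0 finite_occs[of p] by auto
    have d: "d \<in> occs p" "0 < d"
      using Min_in[OF fin ne] unfolding d_def by auto
    have gap: "\<forall>t. 0 < t \<and> t < d \<longrightarrow> t \<notin> occs p"
      using Min_le[OF fin] unfolding d_def by force
    have "d < 5" using less.prems occ_0 d gap unfolding is_cluster_word_def occs_linked_def by auto
    moreover have "d \<noteq> 1" "d \<noteq> 2"
      using d occ_0 not_occ_at_Suc[of p 0] not_occ_at_Suc_Suc[of p 0]
      by (auto simp: occs_def numeral_2_eq_2)
    ultimately have d34: "d = 3 \<or> d = 4" using d by auto
    obtain k' where k: "k = Suc k'"
      using less.prems card_occs_shift[OF occ_0 d \<open>d < 5\<close> gap]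
      unfolding is_cluster_word_def by metis
    have "is_cluster_word k' (drop d p)"
      using is_cluster_word_shift_iff[OF occ_0 d \<open>d < 5\<close> gap] less.prems k by simp
    then have "occ_chain (drop d p) k'" using less.hyps[of "drop d p" k'] d len by simp
    then show ?thesis using occ_0 d34 k occ_chain.shift by (simp add: occs_def)
  qed
qed

lemma is_cluster_word_iff_occ_chain: "is_cluster_word k p \<longleftrightarrow> occ_chain p k"
  using is_cluster_word_imp_occ_chain occ_chain_imp_is_cluster_word by blast

text \<open>A single letter counts as a cluster with no occurrence, matching the convention
  s_{1,0} = 1.\<close>
definition tail_chain :: "nat list \<Rightarrow> nat \<Rightarrow> bool" where
  "tail_chain q k \<longleftrightarrow> (length q = 1 \<and> k = 0) \<or> occ_chain q k"

lemma occ_chain_imp_run: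
  "occ_chain p k \<Longrightarrow>
   \<exists>l. 1 \<le> l \<and> l \<le> k \<and> (\<forall>j<l. occ_at p (3 * j)) \<and> tail_chain (drop (3 * l + 1) p) (k - l)"
proof (induction rule: occ_chain.induct)
  case (single p)
  then show ?case by (intro exI[of _ 1]) (auto simp: tail_chain_def)
next
  case (shift p d k)
  from shift.hyps(2) show ?case
  proof
    assume d: "d = 3"
    obtain l where l: "1 \<le> l" "l \<le> k" "\<forall>j<l. occ_at (drop 3 p) (3 * j)"
      "tail_chain (drop (3 * l + 1) (drop 3 p)) (k - l)"
      using shift.IH d by blast
    have "occ_at p (3 * j)" if "j < Suc l" for j
      using shift.hyps(1) l(3) occ_at_drop[of 3 p "3 * (j - 1)"] that
      by (cases j) (auto simp: add.commute)
    moreover have "drop (3 * l + 1) (drop 3 p) = drop (3 * Suc l + 1) p" by simp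
    ultimately show ?case using l by (intro exI[of _ "Suc l"]) auto
  next
    assume "d = 4"
    then show ?case using shift by (intro exI[of _ 1]) (auto simp: tail_chain_def)
  qed
qed

lemma run_imp_occ_chain:
  "1 \<le> l \<Longrightarrow> l \<le> k \<Longrightarrow> \<forall>j<l. occ_at p (3 * j) \<Longrightarrow> tail_chain (drop (3 * l + 1) p) (k - l)
   \<Longrightarrow> occ_chain p k"
proof (induction l arbitrary: p k)
  case 0
  then show ?case by simp
next
  case (Suc l)
  have occ: "occ_at p 0" and k: "k = Suc (k - 1)" using Suc.prems by auto
  show ?case
  proof (cases "l = 0")
    case True
    then have "length p = 5 \<and> k = 1 \<or> occ_chain (drop 4 p) (k - 1)"
      using Suc.prems(2,4) occ_at_length[OF occ] by (auto simp: tail_chain_def)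
    then show ?thesis using occ k occ_chain.single occ_chain.shift[of p 4] by metis
  next
    case False
    have "\<forall>j<l. occ_at (drop 3 p) (3 * j)"
      using Suc.prems(3) by (auto simp: occ_at_drop add.commute)
    moreover have "drop (3 * l + 1) (drop 3 p) = drop (3 * Suc l + 1) p" by simp
    ultimately have "occ_chain (drop 3 p) (k - 1)"
      using Suc.IH[of "k - 1" "drop 3 p"] Suc.prems False by auto
    then show ?thesis using occ k occ_chain.shift[of p 3] by metis
  qed
qed

lemma occ_chain_hd_least: "occ_chain p k \<Longrightarrow> i < length p \<Longrightarrow> p!0 \<le> p!i"
proof (induction arbitrary: i rule: occ_chain.induct)
  case (single p)
  then show ?case by (auto simp: occ_at_iff less_Suc_eq numeral_eq_Suc)
next
  case (shift p d k)
  show ?case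
  proof (cases "i < d")
    case True
    then show ?thesis using shift.hyps(1,2) by (auto simp: occ_at_iff less_Suc_eq numeral_eq_Suc)
  next
    case False
    have "drop d p ! 0 \<le> drop d p ! (i - d)" using shift.IH[of "i - d"] shift.prems False by simp
    moreover have "p!0 < p!d" using shift.hyps(1,2) by (auto simp: occ_at_iff)
    ultimately show ?thesis using False shift.prems by simp
  qed
qed

lemma tail_chain_hd_least: "tail_chain q k \<Longrightarrow> i < length q \<Longrightarrow> q!0 \<le> q!i"
  unfolding tail_chain_def using occ_chain_hd_least by auto

section \<open>Counting clusters on an arbitrary set of letters\<close>

lemma occ_chain_map:
  "strict_mono_on A f \<Longrightarrow> set p \<subseteq> A \<Longrightarrow> occ_chain (map f p) k \<longleftrightarrow> occ_chain p k"
  by (simp add: is_cluster_word_iff_occ_chain[symmetric] is_cluster_word_map)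

lemma short_clusters_empty: "n < 5 \<Longrightarrow> {p. is_cluster n k p} = {}"
  by (simp add: is_cluster_def sigma_def)

lemma s_eq_card_occ_chains: "n \<noteq> 1 \<Longrightarrow> s n k = card {p. is_perm n p \<and> occ_chain p k}"
  unfolding s_def is_cluster_iff is_cluster_word_iff_occ_chain by simp

lemma strict_mono_enumeration:
  fixes S :: "'a::linorder set"
  assumes "finite S"
  obtains g where "strict_mono_on {1..card S} g" "bij_betw g {1..card S} S"
proof
  define xs where "xs = sorted_list_of_set S"
  have xs: "sorted_wrt (<) xs" "set xs = S" "length xs = card S"
    using assms by (simp_all add: xs_def)
  show mono: "strict_mono_on {1..card S} (\<lambda>i. xs ! (i - 1))"
    using xs sorted_wrt_iff_nth_less[of "(<)" xs] by (auto simp: strict_mono_on_def)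
  have "(\<lambda>i. xs ! (i - 1)) ` {1..card S} = S"
    unfolding image_Suc_lessThan[symmetric] image_image using xs by (auto simp: set_conv_nth)
  then show "bij_betw (\<lambda>i. xs ! (i - 1)) {1..card S} S"
    using strict_mono_on_imp_inj_on[OF mono] by (simp add: bij_betw_def)
qed

lemma card_distinct_lists_relabel:
  assumes g: "bij_betw g A S"
  shows "card {q. distinct q \<and> set q = S \<and> P q} = card {p. distinct p \<and> set p = A \<and> P (map g p)}"
proof -
  have inj: "inj_on g A" and img: "g ` A = S" using g by (auto simp: bij_betw_def)
  have image: "map g ` {p. distinct p \<and> set p = A \<and> P (map g p)} = {q. distinct q \<and> set q = S \<and> P q}"
  proof (intro equalityI subsetI)
    fix q assume q: "q \<in> {q. distinct q \<and> set q = S \<and> P q}"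
    then have "q \<in> map g ` lists A"
      using bij_betw_imp_surj_on[OF bij_lists[OF g]] by (simp add: in_lists_conv_set)
    then obtain p where p: "set p \<subseteq> A" "q = map g p" by auto
    have "distinct p" using q p by (simp add: distinct_map)
    moreover have "set p = A"
      using q p img inj_on_image_eq_iff[OF inj p(1) order_refl] by simp
    ultimately show "q \<in> map g ` {p. distinct p \<and> set p = A \<and> P (map g p)}" using p q by blast
  next
    fix q assume "q \<in> map g ` {p. distinct p \<and> set p = A \<and> P (map g p)}"
    then show "q \<in> {q. distinct q \<and> set q = S \<and> P q}"
      using inj img by (auto simp: distinct_map)
  qed
  have "inj_on (map g) {p. distinct p \<and> set p = A \<and> P (map g p)}"
    by (rule inj_on_subset[OF bij_betw_imp_inj_on[OF bij_lists[OF g]]]) (auto simp: in_lists_conv_set)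
  then show ?thesis unfolding image[symmetric] by (rule card_image)
qed

lemma card_tail_chains:
  assumes "finite S" "S \<noteq> {}"
  shows "card {q. distinct q \<and> set q = S \<and> tail_chain q k} = s (card S) k"
proof (cases "card S = 1")
  case True
  then obtain x where S: "S = {x}" by (auto simp: card_1_singleton_iff)
  have "distinct q \<and> set q = {x} \<longleftrightarrow> q = [x]" for q
    by (cases q) (auto simp: subset_singleton_iff)
  then have "{q. distinct q \<and> set q = S \<and> tail_chain q k} = {q. q = [x] \<and> tail_chain q k}"
    using S by blast
  moreover have "\<not> occ_chain [x] k"
    using occ_at_length[OF occ_chain_occ_at_0] by fastforce
  ultimately have "{q. distinct q \<and> set q = S \<and> tail_chain q k} = (if k = 0 then {[x]} else {})"
    by (auto simp: tail_chain_def)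
  moreover have "s 1 k = (if k = 0 then 1 else 0)"
    by (simp add: s_def short_clusters_empty)
  ultimately show ?thesis using True by simp
next
  case False
  obtain g where g: "strict_mono_on {1..card S} g" "bij_betw g {1..card S} S"
    using strict_mono_enumeration[OF assms(1)] by blast
  have "{q. distinct q \<and> set q = S \<and> tail_chain q k} = {q. distinct q \<and> set q = S \<and> occ_chain q k}"
    using False distinct_card by (fastforce simp: tail_chain_def)
  also have "card \<dots> = card {p. distinct p \<and> set p = {1..card S} \<and> occ_chain (map g p) k}"
    by (rule card_distinct_lists_relabel[OF g(2)])
  also have "{p. distinct p \<and> set p = {1..card S} \<and> occ_chain (map g p) k}
      = {p. is_perm (card S) p \<and> occ_chain p k}"
    using occ_chain_map[OF g(1)] distinct_card by (fastforce simp: is_perm_def)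
  finally show ?thesis using s_eq_card_occ_chains[OF False] by simp
qed

section \<open>Perfect matchings\<close>

definition pair_set :: "('a \<times> 'a) list \<Rightarrow> 'a set" where
  "pair_set ps = fst ` set ps \<union> snd ` set ps"

text \<open>Perfect matchings of B, each pair written (b, c) with b < c, listed so that the
  smaller elements b are sorted with respect to R.\<close>
definition pair_lists ::
    "('a::linorder \<Rightarrow> 'a \<Rightarrow> bool) \<Rightarrow> nat \<Rightarrow> 'a set \<Rightarrow> ('a \<times> 'a) list set" where
  "pair_lists R l B = {ps. length ps = l \<and> sorted_wrt R (map fst ps) \<and> (\<forall>x\<in>set ps. fst x < snd x)
     \<and> distinct (map fst ps @ map snd ps) \<and> pair_set ps = B}"

lemma card_pair_set: "ps \<in> pair_lists R l B \<Longrightarrow> card B = 2 * l"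
  using distinct_card[of "map fst ps @ map snd ps"]
  by (auto simp: pair_lists_def pair_set_def)

lemma Cons_in_pair_lists_less_iff:
  assumes "finite B"
  shows "(b, c) # ps \<in> pair_lists (<) (Suc l) B \<longleftrightarrow>
    b = Min B \<and> c \<in> B - {b} \<and> ps \<in> pair_lists (<) l (B - {b, c})"
proof
  assume ps: "(b, c) # ps \<in> pair_lists (<) (Suc l) B"
  then have B: "B = insert b (insert c (pair_set ps))" and bc: "b < c"
    and fsts: "\<forall>x\<in>set ps. b < fst x" and pairs: "\<forall>x\<in>set ps. fst x < snd x"
    by (auto simp: pair_lists_def pair_set_def)
  moreover have "\<forall>x\<in>set ps. b < snd x" using fsts pairs less_trans by blast
  ultimately have "b \<le> x" if "x \<in> B" for x
    using that unfolding B pair_set_def by fastforce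
  then have "b = Min B" using assms B by (intro Min_eqI[symmetric]) auto
  moreover have "b \<notin> pair_set ps" "c \<notin> pair_set ps"
    using ps by (auto simp: pair_lists_def pair_set_def)
  ultimately show "b = Min B \<and> c \<in> B - {b} \<and> ps \<in> pair_lists (<) l (B - {b, c})"
    using ps bc B by (auto simp: pair_lists_def)
next
  assume h: "b = Min B \<and> c \<in> B - {b} \<and> ps \<in> pair_lists (<) l (B - {b, c})"
  then have "B \<noteq> {}" by auto
  then have "b \<in> B" "b < c" "\<forall>x\<in>B - {b}. b < x"
    using h assms Min_in[of B] Min_le[of B] by (auto simp: order.order_iff_strict)
  then show "(b, c) # ps \<in> pair_lists (<) (Suc l) B"
    using h by (auto simp: pair_lists_def pair_set_def)
qed

lemma pair_lists_less_Suc: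
  assumes "finite B"
  shows "pair_lists (<) (Suc l) B =
    (\<Union>c \<in> B - {Min B}. (\<lambda>ps. (Min B, c) # ps) ` pair_lists (<) l (B - {Min B, c}))"
proof (intro set_eqI)
  fix ps :: "('a \<times> 'a) list"
  show "ps \<in> pair_lists (<) (Suc l) B \<longleftrightarrow>
    ps \<in> (\<Union>c \<in> B - {Min B}. (\<lambda>ps. (Min B, c) # ps) ` pair_lists (<) l (B - {Min B, c}))"
  proof (cases ps)
    case Nil
    then show ?thesis by (auto simp: pair_lists_def)
  next
    case (Cons x ps')
    then obtain b c where "ps = (b, c) # ps'" by (cases x) auto
    then show ?thesis using Cons_in_pair_lists_less_iff[OF assms, of b c ps' l] by auto
  qed
qed

lemma set_subset_pair_set: "set ps \<subseteq> pair_set ps \<times> pair_set ps"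
  by (auto simp: pair_set_def intro: rev_image_eqI)

lemma finite_pair_lists: "finite B \<Longrightarrow> finite (pair_lists R l B)"
  by (rule finite_subset[OF _ finite_lists_length_eq[of "B \<times> B" l]])
    (use set_subset_pair_set in \<open>auto simp: pair_lists_def\<close>)

lemma dfact_odd_Suc: "dfact_odd (Suc l) = (2 * l + 1) * dfact_odd l"
  by (simp add: dfact_odd_def)

lemma card_pair_lists_less:
  "finite B \<Longrightarrow> card B = 2 * l \<Longrightarrow> card (pair_lists (<) l B) = dfact_odd l"
proof (induction l arbitrary: B)
  case 0
  then have "pair_lists (<) 0 B = {[]}" by (auto simp: pair_lists_def pair_set_def)
  then show ?case by (simp add: dfact_odd_def)
next
  case (Suc l)
  have "B \<noteq> {}" using Suc.prems by auto
  then have min: "Min B \<in> B" using Suc.prems by simp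
  have "card (pair_lists (<) (Suc l) B) =
    (\<Sum>c \<in> B - {Min B}. card ((\<lambda>ps. (Min B, c) # ps) ` pair_lists (<) l (B - {Min B, c})))"
    unfolding pair_lists_less_Suc[OF Suc.prems(1)]
    using Suc.prems(1) by (intro card_UN_disjoint) (auto simp: finite_pair_lists)
  also have "\<dots> = (\<Sum>c \<in> B - {Min B}. dfact_odd l)"
  proof (intro sum.cong refl)
    fix c assume "c \<in> B - {Min B}"
    then have "card (B - {Min B, c}) = 2 * l" using Suc.prems min by (subst card_Diff_subset) auto
    then show "card ((\<lambda>ps. (Min B, c) # ps) ` pair_lists (<) l (B - {Min B, c})) = dfact_odd l"
      using Suc.IH Suc.prems(1) by (simp add: card_image inj_on_def)
  qed
  also have "\<dots> = (2 * l + 1) * dfact_odd l" using Suc.prems min by simp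
  finally show ?case by (simp add: dfact_odd_Suc)
qed

lemma pair_lists_greater_eq_rev: "pair_lists (>) l B = rev ` pair_lists (<) l B"
proof -
  have rev_iff: "ps \<in> pair_lists (>) l B \<longleftrightarrow> rev ps \<in> pair_lists (<) l B" for ps
    by (auto simp: pair_lists_def pair_set_def rev_map[symmetric] sorted_wrt_rev)
  show ?thesis
  proof (intro set_eqI iffI)
    fix ps assume "ps \<in> pair_lists (>) l B"
    then have "rev ps \<in> pair_lists (<) l B" using rev_iff by blast
    then show "ps \<in> rev ` pair_lists (<) l B" by (rule rev_image_eqI) simp
  next
    fix ps assume "ps \<in> rev ` pair_lists (<) l B"
    then obtain qs where "qs \<in> pair_lists (<) l B" "ps = rev qs" by blast
    then show "ps \<in> pair_lists (>) l B" using rev_iff[of ps] by simp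
  qed
qed

lemma card_pair_lists_greater:
  "finite B \<Longrightarrow> card B = 2 * l \<Longrightarrow> card (pair_lists (>) l B) = dfact_odd l"
  unfolding pair_lists_greater_eq_rev
  by (simp add: card_image card_pair_lists_less)

section \<open>The initial run of a cluster\<close>

fun run_word :: "nat \<Rightarrow> (nat \<times> nat) list \<Rightarrow> nat list" where
  "run_word a [] = [a]"
| "run_word a ((b, c) # ps) = a # b # c # run_word (Suc a) ps"

lemma length_run_word [simp]: "length (run_word a ps) = 3 * length ps + 1"
  by (induction a ps rule: run_word.induct) auto

lemma set_run_word: "set (run_word a ps) = {a..a + length ps} \<union> pair_set ps"
  by (induction a ps rule: run_word.induct) (auto simp: pair_set_def)

lemma run_word_nth_3: "j \<le> length ps \<Longrightarrow> run_word a ps ! (3 * j) = a + j"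
proof (induction a ps arbitrary: j rule: run_word.induct)
  case (2 a b c ps)
  then show ?case by (cases j) auto
qed simp

lemma run_word_nth_3_1: "j < length ps \<Longrightarrow> run_word a ps ! (3 * j + 1) = fst (ps ! j)"
proof (induction a ps arbitrary: j rule: run_word.induct)
  case (2 a b c ps)
  then show ?case by (cases j) auto
qed simp

lemma run_word_nth_3_2: "j < length ps \<Longrightarrow> run_word a ps ! (3 * j + 2) = snd (ps ! j)"
proof (induction a ps arbitrary: j rule: run_word.induct)
  case (2 a b c ps)
  then show ?case by (cases j) auto
qed simp

lemma run_word_inject: "run_word a ps = run_word a qs \<Longrightarrow> ps = qs"
proof (induction a ps arbitrary: qs rule: run_word.induct)
  case (1 a)
  then show ?case by (cases qs) auto
next
  case (2 a b c ps)
  then show ?case by (cases qs) auto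
qed

lemma distinct_run_word_iff:
  assumes "\<forall>x \<in> pair_set ps. a + length ps < x"
  shows "distinct (run_word a ps) \<longleftrightarrow> distinct (map fst ps @ map snd ps)"
  using assms
proof (induction a ps rule: run_word.induct)
  case (2 a b c ps)
  have bound: "\<forall>x \<in> pair_set ps. Suc a + length ps < x"
    and "Suc a + length ps < b" "Suc a + length ps < c"
    using "2.prems" by (auto simp: pair_set_def)
  then have "distinct (run_word a ((b, c) # ps)) \<longleftrightarrow>
      b \<noteq> c \<and> b \<notin> pair_set ps \<and> c \<notin> pair_set ps \<and> distinct (run_word (Suc a) ps)"
    by (auto simp: set_run_word)
  moreover have "distinct (map fst ((b, c) # ps) @ map snd ((b, c) # ps)) \<longleftrightarrow>
      b \<noteq> c \<and> b \<notin> pair_set ps \<and> c \<notin> pair_set ps \<and> distinct (map fst ps @ map snd ps)"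
    by (auto simp: pair_set_def)
  ultimately show ?case using "2.IH"[OF bound] by simp
qed simp

lemma occ_at_run_word:
  assumes "sorted_wrt (>) (map fst ps)" "\<forall>x\<in>set ps. fst x < snd x"
    and "q \<noteq> []" "a + length ps < hd q" "\<forall>x\<in>set ps. hd q < fst x"
    and "j < length ps"
  shows "occ_at (run_word a ps @ q) (3 * j)"
  using assms
proof (induction a ps arbitrary: j rule: run_word.induct)
  case (2 a b c ps)
  show ?case
  proof (cases j)
    case 0
    have "b < c" "hd q < b" using "2.prems" by auto
    moreover have "Suc a < (run_word (Suc a) ps @ q) ! 1 \<and> (run_word (Suc a) ps @ q) ! 1 < b"
    proof (cases ps)
      case Nil
      then show ?thesis using "2.prems" by (cases q) auto
    next
      case (Cons x ps')
      then show ?thesis using "2.prems" by (cases x) auto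
    qed
    moreover have "(run_word (Suc a) ps @ q) ! 0 = Suc a"
      using run_word_nth_3[of 0 ps "Suc a"] by (simp add: nth_append)
    moreover have "5 \<le> length (run_word a ((b, c) # ps) @ q)" using "2.prems"(3) by (cases q) auto
    ultimately show ?thesis using 0 by (simp add: occ_at_iff)
  next
    case (Suc j')
    then have "occ_at (run_word (Suc a) ps @ q) (3 * j')" using "2.IH" "2.prems" by auto
    then show ?thesis
      using Suc occ_at_drop[of 3 "run_word a ((b, c) # ps) @ q" "3 * j'"] by (simp add: add.commute)
  qed
qed simp

lemma transp_Suc_chain:
  assumes "transp R" and step: "\<And>m. m < N \<Longrightarrow> R (f m) (f (Suc m))"
    and "i < j" "j \<le> N"
  shows "R (f i) (f j)"
  using \<open>i < j\<close> \<open>j \<le> N\<close>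
proof (induction i j rule: less_Suc_induct)
  case (1 i)
  then show ?case using step by simp
next
  case (2 i j k)
  then show ?case using \<open>transp R\<close> by (meson less_imp_le_nat order.strict_trans2 transpD)
qed

context
  fixes p :: "nat list" and l :: nat
  assumes occ: "\<forall>j<l. occ_at p (3 * j)"
begin

lemma run_letters_3_less: "i < j \<Longrightarrow> j \<le> l \<Longrightarrow> p ! (3 * i) < p ! (3 * j)"
  using transp_Suc_chain[of "(<)" l "\<lambda>j. p ! (3 * j)"] occ
  by (simp add: occ_at_iff add.commute)

lemma run_letters_3_1_greater: "i < j \<Longrightarrow> j \<le> l \<Longrightarrow> p ! (3 * j + 1) < p ! (3 * i + 1)"
  using transp_Suc_chain[of "(>)" l "\<lambda>j. p ! (3 * j + 1)"] occ
  by (simp add: occ_at_iff add.commute)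

lemma run_letters_3_1_less_3_2: "j < l \<Longrightarrow> p ! (3 * j + 1) < p ! (3 * j + 2)"
  using occ by (simp add: occ_at_iff)

lemma run_letter_last_less: "1 \<le> l \<Longrightarrow> p ! (3 * l) < p ! (3 * l + 1)"
proof -
  assume "1 \<le> l"
  then obtain m where "l = Suc m" by (cases l) auto
  then show ?thesis using occ[rule_format, of m] by (simp add: occ_at_iff add.commute)
qed

end

lemma letter_after_run_least:
  assumes occ: "\<forall>j<l. occ_at p (3 * j)" and tail: "tail_chain (drop (3 * l + 1) p) kk"
    and "i < length p" "\<not> (i mod 3 = 0 \<and> i \<le> 3 * l)"
  shows "p ! (3 * l + 1) \<le> p ! i"
proof (cases "3 * l + 1 \<le> i")
  case True
  then show ?thesis using tail_chain_hd_least[OF tail, of "i - (3 * l + 1)"] assms(3) by simp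
next
  case False
  define j where "j = i div 3"
  have "j < l" "i = 3 * j + 1 \<or> i = 3 * j + 2"
    using False assms(4) unfolding j_def by presburger+
  then show ?thesis
    using run_letters_3_1_greater[OF occ \<open>j < l\<close>] run_letters_3_1_less_3_2[OF occ] by fastforce
qed

lemma run_letters_values:
  assumes perm: "is_perm n p" and l: "1 \<le> l" "3 * l + 2 \<le> n"
    and occ: "\<forall>j<l. occ_at p (3 * j)"
    and tail: "tail_chain (drop (3 * l + 1) p) kk"
  shows "\<forall>j\<le>l. p ! (3 * j) = j + 1" and "p ! (3 * l + 1) = l + 2"
proof -
  define y where "y = p ! (3 * l + 1)"
  have len: "length p = n" and set_p: "set p = {1..n}" using perm by (auto simp: is_perm_def)
  have letters: "p ! i \<in> {1..n}" if "i < n" for i using that len set_p nth_mem by blast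
  have high: "y \<le> p ! i" if "i < n" "\<not> (i mod 3 = 0 \<and> i \<le> 3 * l)" for i
    using letter_after_run_least[OF occ tail] that len by (simp add: y_def)
  have "y \<le> n" using letters[of "3 * l + 1"] l by (simp add: y_def)
  have a_letters: "[1..<y] = map (\<lambda>j. p ! (3 * j)) [0..<l + 1]"
  proof (rule strict_sorted_equal)
    show "sorted_wrt (<) (map (\<lambda>j. p ! (3 * j)) [0..<l + 1])"
      using run_letters_3_less[OF occ] by (auto simp: sorted_wrt_iff_nth_less simp del: upt_Suc)
    show "set [1..<y] = set (map (\<lambda>j. p ! (3 * j)) [0..<l + 1])"
    proof (intro equalityI subsetI)
      fix v assume "v \<in> set [1..<y]"
      then have "v \<in> set p" using \<open>y \<le> n\<close> set_p by auto
      then obtain i where i: "i < n" "v = p ! i" using len by (auto simp: in_set_conv_nth)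
      moreover have "p ! i < y" using i \<open>v \<in> set [1..<y]\<close> by simp
      ultimately have "i mod 3 = 0 \<and> i \<le> 3 * l" using high leD by blast
      then have "i = 3 * (i div 3)" "i div 3 \<le> l" by auto
      then show "v \<in> set (map (\<lambda>j. p ! (3 * j)) [0..<l + 1])"
        unfolding set_map set_upt using i by (intro image_eqI[of _ _ "i div 3"]) auto
    next
      fix v assume "v \<in> set (map (\<lambda>j. p ! (3 * j)) [0..<l + 1])"
      then obtain j where j: "j \<le> l" "v = p ! (3 * j)"
        by (auto simp del: upt_Suc simp: less_Suc_eq_le)
      have "p ! (3 * j) \<le> p ! (3 * l)"
        using run_letters_3_less[OF occ, of j l] j(1) by (cases "j = l") auto
      then show "v \<in> set [1..<y]"
        using j letters[of "3 * j"] run_letter_last_less[OF occ l(1)] l by (auto simp: y_def)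
    qed
  qed simp
  have "y = l + 2" using arg_cong[OF a_letters, of length] by (simp del: upt_Suc)
  moreover have "p ! (3 * j) = j + 1" if "j \<le> l" for j
    using arg_cong[OF a_letters, of "\<lambda>xs. xs ! j"] that \<open>y = l + 2\<close>
    by (simp del: upt_Suc add: nth_append)
  ultimately show "\<forall>j\<le>l. p ! (3 * j) = j + 1" and "p ! (3 * l + 1) = l + 2"
    by (auto simp: y_def)
qed

section \<open>The recurrence\<close>

lemma hd_tail_chain_eq_Min: "tail_chain q k \<Longrightarrow> hd q = Min (set q)"
proof -
  assume tail: "tail_chain q k"
  then have "q \<noteq> []"
    by (auto simp: tail_chain_def dest: occ_at_length[OF occ_chain_occ_at_0])
  then show ?thesis
    using tail_chain_hd_least[OF tail]
    by (intro Min_eqI[symmetric]) (auto simp: in_set_conv_nth hd_conv_nth)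
qed

text \<open>For 1 \<le> l \<le> k: the k-clusters of length n whose maximal initial run of occurrences
  at distance 3 has l members.\<close>
definition run_clusters :: "nat \<Rightarrow> nat \<Rightarrow> nat \<Rightarrow> nat list set" where
  "run_clusters n k l =
     {p. is_perm n p \<and> (\<forall>j<l. occ_at p (3 * j)) \<and> tail_chain (drop (3 * l + 1) p) (k - l)}"

text \<open>The data determining such a cluster: the pairs of letters at positions 3j+1, 3j+2
  (j < l) and the tail from position 3l+1 on.\<close>
definition run_data :: "nat \<Rightarrow> nat \<Rightarrow> nat \<Rightarrow> ((nat \<times> nat) list \<times> nat list) set" where
  "run_data n k l = {(ps, q). ps \<in> pair_lists (>) l (pair_set ps) \<and> pair_set ps \<subseteq> {l + 3..n}
     \<and> distinct q \<and> set q = {l + 2..n} - pair_set ps \<and> tail_chain q (k - l)}"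

definition assemble_run :: "(nat \<times> nat) list \<times> nat list \<Rightarrow> nat list" where
  "assemble_run = (\<lambda>(ps, q). run_word 1 ps @ q)"

lemma assemble_run_mem_run_clusters:
  assumes "3 * l + 2 \<le> n" and "x \<in> run_data n k l"
  shows "assemble_run x \<in> run_clusters n k l"
proof -
  obtain ps q where x: "x = (ps, q)" by (cases x)
  have ps: "ps \<in> pair_lists (>) l (pair_set ps)" and B: "pair_set ps \<subseteq> {l + 3..n}"
    and dq: "distinct q" and sq: "set q = {l + 2..n} - pair_set ps" and tail: "tail_chain q (k - l)"
    using assms(2) by (auto simp: x run_data_def)
  have len: "length ps = l" using ps by (simp add: pair_lists_def)
  have "l + 2 \<in> set q" using sq B assms(1) by auto
  then have "q \<noteq> []" by auto
  have "Min (set q) = l + 2" using sq B assms(1) by (intro Min_eqI) auto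
  then have "hd q = l + 2" using hd_tail_chain_eq_Min[OF tail] by simp
  have bound: "\<forall>x \<in> pair_set ps. 1 + length ps < x" using B len by auto
  have "distinct (run_word 1 ps)"
    using distinct_run_word_iff[OF bound] ps by (simp add: pair_lists_def)
  moreover have "set (run_word 1 ps) = {1..1 + l} \<union> pair_set ps" by (simp add: set_run_word len)
  ultimately have "distinct (run_word 1 ps @ q)" "set (run_word 1 ps @ q) = {1..n}"
    using dq sq B assms(1) by auto
  then have "is_perm n (run_word 1 ps @ q)"
    unfolding is_perm_def using distinct_card[of "run_word 1 ps @ q"] by simp
  moreover have "hd q < fst x" if "x \<in> set ps" for x
  proof -
    have "fst x \<in> pair_set ps" using that by (simp add: pair_set_def)
    then show ?thesis using B \<open>hd q = l + 2\<close> by auto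
  qed
  then have "\<forall>j<l. occ_at (run_word 1 ps @ q) (3 * j)"
    using occ_at_run_word[of ps q 1] ps \<open>q \<noteq> []\<close> \<open>hd q = l + 2\<close> len
    unfolding pair_lists_def by auto
  moreover have "drop (3 * l + 1) (run_word 1 ps @ q) = q" using len by simp
  ultimately show ?thesis using tail by (simp add: x assemble_run_def run_clusters_def)
qed

lemma run_prefix_eq_run_word:
  assumes perm: "is_perm n p" and l: "1 \<le> l" "3 * l + 2 \<le> n"
    and occ: "\<forall>j<l. occ_at p (3 * j)" and tail: "tail_chain (drop (3 * l + 1) p) kk"
  shows "take (3 * l + 1) p = run_word 1 (map (\<lambda>j. (p ! (3 * j + 1), p ! (3 * j + 2))) [0..<l])"
    (is "_ = run_word 1 ?ps")
proof (rule nth_equalityI)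
  have len: "length p = n" using perm by (simp add: is_perm_def)
  then show "length (take (3 * l + 1) p) = length (run_word 1 ?ps)" using l by simp
  fix i assume "i < length (take (3 * l + 1) p)"
  then have i: "i < 3 * l + 1" using len l by simp
  define j where "j = i div 3"
  have "i = 3 * j \<or> i = 3 * j + 1 \<and> j < l \<or> i = 3 * j + 2 \<and> j < l"
    using i unfolding j_def by presburger
  then show "take (3 * l + 1) p ! i = run_word 1 ?ps ! i"
  proof (elim disjE conjE)
    assume "i = 3 * j"
    moreover have "j \<le> l" using i by (simp add: j_def)
    ultimately show ?thesis
      using run_letters_values(1)[OF perm l occ tail] run_word_nth_3[of j ?ps 1] i by simp
  next
    assume "i = 3 * j + 1" "j < l"
    then show ?thesis using run_word_nth_3_1[of j ?ps 1] i by simp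
  next
    assume "i = 3 * j + 2" "j < l"
    then show ?thesis using run_word_nth_3_2[of j ?ps 1] i by simp
  qed
qed

lemma run_pairs_mem_pair_lists:
  assumes perm: "is_perm n p" and l: "1 \<le> l" "3 * l + 2 \<le> n"
    and occ: "\<forall>j<l. occ_at p (3 * j)" and tail: "tail_chain (drop (3 * l + 1) p) kk"
  defines "ps \<equiv> map (\<lambda>j. (p ! (3 * j + 1), p ! (3 * j + 2))) [0..<l]"
  shows "ps \<in> pair_lists (>) l (pair_set ps)" and "pair_set ps \<subseteq> {l + 3..n}"
proof -
  have len: "length p = n" and set_p: "set p = {1..n}" using perm by (auto simp: is_perm_def)
  have "p ! (3 * j + 1) \<in> {l + 3..n} \<and> p ! (3 * j + 2) \<in> {l + 3..n}" if "j < l" for j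
  proof -
    have "l + 2 < p ! (3 * j + 1)"
      using run_letters_3_1_greater[OF occ that] run_letters_values(2)[OF perm l occ tail] by simp
    moreover have "p ! (3 * j + 1) < p ! (3 * j + 2)" by (rule run_letters_3_1_less_3_2[OF occ that])
    moreover have "p ! (3 * j + 1) \<le> n" "p ! (3 * j + 2) \<le> n"
      using that l len set_p nth_mem[of "3 * j + 1" p] nth_mem[of "3 * j + 2" p] by auto
    ultimately show ?thesis by auto
  qed
  then show B: "pair_set ps \<subseteq> {l + 3..n}" by (auto simp: ps_def pair_set_def)
  have "distinct (take (3 * l + 1) p)" using perm by (simp add: is_perm_def)
  then have "distinct (map fst ps @ map snd ps)"
    using distinct_run_word_iff[of ps 1] B run_prefix_eq_run_word[OF perm l occ tail]
    by (force simp: ps_def)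
  moreover have "sorted_wrt (>) (map fst ps)"
    using run_letters_3_1_greater[OF occ] by (auto simp: ps_def sorted_wrt_iff_nth_less)
  moreover have "\<forall>x\<in>set ps. fst x < snd x"
    using run_letters_3_1_less_3_2[OF occ] by (auto simp: ps_def)
  moreover have "length ps = l" by (simp add: ps_def)
  ultimately show "ps \<in> pair_lists (>) l (pair_set ps)" by (simp add: pair_lists_def)
qed

lemma run_clusters_subset_image:
  assumes l: "1 \<le> l" "3 * l + 2 \<le> n" and p: "p \<in> run_clusters n k l"
  shows "p \<in> assemble_run ` run_data n k l"
proof -
  have perm: "is_perm n p" and occ: "\<forall>j<l. occ_at p (3 * j)"
    and tail: "tail_chain (drop (3 * l + 1) p) (k - l)"
    using p by (auto simp: run_clusters_def)
  define ps where "ps = map (\<lambda>j. (p ! (3 * j + 1), p ! (3 * j + 2))) [0..<l]"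
  define q where "q = drop (3 * l + 1) p"
  have "take (3 * l + 1) p = run_word 1 ps"
    using run_prefix_eq_run_word[OF perm l occ tail] by (simp add: ps_def)
  then have p_eq: "p = run_word 1 ps @ q" unfolding q_def by (metis append_take_drop_id)
  have ps: "ps \<in> pair_lists (>) l (pair_set ps)" and B: "pair_set ps \<subseteq> {l + 3..n}"
    using run_pairs_mem_pair_lists[OF perm l occ tail] by (simp_all add: ps_def)
  have dist: "distinct (run_word 1 ps @ q)" and "set (run_word 1 ps) \<union> set q = {1..n}"
    using perm p_eq by (simp_all add: is_perm_def)
  moreover have "set (run_word 1 ps) \<inter> set q = {}" using dist by simp
  ultimately have "set q = {1..n} - set (run_word 1 ps)" by blast
  then have "set q = {l + 2..n} - pair_set ps"
    using B by (auto simp: set_run_word ps_def)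
  moreover have "distinct q" using dist by simp
  ultimately have "(ps, q) \<in> run_data n k l" using ps B tail by (simp add: run_data_def q_def)
  then show ?thesis using p_eq by (force simp: assemble_run_def)
qed

lemma inj_on_assemble_run: "inj_on assemble_run (run_data n k l)"
proof (rule inj_onI)
  fix x y assume "x \<in> run_data n k l" "y \<in> run_data n k l" and eq: "assemble_run x = assemble_run y"
  then obtain ps q ps' q' where xy: "x = (ps, q)" "y = (ps', q')" "length ps = l" "length ps' = l"
    by (auto simp: run_data_def pair_lists_def)
  then have "run_word 1 ps = run_word 1 ps' \<and> q = q'"
    using eq by (simp add: assemble_run_def)
  then show "x = y" using xy run_word_inject by blast
qed

lemma card_run_data:
  "card (run_data n k l) = (n - l - 2 choose (2 * l)) * dfact_odd l * s (n - 3 * l - 1) (k - l)"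
  if "3 * l + 2 \<le> n"
proof -
  define Bs where "Bs = {B. B \<subseteq> {l + 3..n} \<and> card B = 2 * l}"
  define Q where "Q B = {q. distinct q \<and> set q = {l + 2..n} - B \<and> tail_chain q (k - l)}" for B
  have decomp: "run_data n k l = (\<Union>B\<in>Bs. pair_lists (>) l B \<times> Q B)"
    by (auto simp: run_data_def Bs_def Q_def card_pair_set pair_lists_def)
  have "finite Bs" unfolding Bs_def by (rule finite_subset[of _ "Pow {l + 3..n}"]) auto
  have finite_Q: "finite (Q B)" for B
    by (rule finite_subset[OF _ finite_subset_distinct[of "{l + 2..n}"]]) (auto simp: Q_def)
  have card_B: "card (pair_lists (>) l B \<times> Q B) = dfact_odd l * s (n - 3 * l - 1) (k - l)"
    if "B \<in> Bs" for B
  proof -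
    have B: "B \<subseteq> {l + 3..n}" "card B = 2 * l" "finite B"
      using that by (auto simp: Bs_def intro: finite_subset)
    moreover have "B \<subseteq> {l + 2..n}" using B by auto
    ultimately have "card ({l + 2..n} - B) = n - 3 * l - 1" and "l + 2 \<in> {l + 2..n} - B"
      using \<open>3 * l + 2 \<le> n\<close> by (auto simp: card_Diff_subset)
    moreover have "{l + 2..n} - B \<noteq> {}" using \<open>l + 2 \<in> {l + 2..n} - B\<close> by blast
    ultimately have "card (Q B) = s (n - 3 * l - 1) (k - l)"
      unfolding Q_def using card_tail_chains[of "{l + 2..n} - B" "k - l"] by simp
    then show ?thesis
      using card_pair_lists_greater[OF B(3,2)] by (simp add: card_cartesian_product)
  qed
  have "finite (pair_lists (>) l B \<times> Q B)" if "B \<in> Bs" for B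
  proof -
    have "finite B" using that by (auto simp: Bs_def intro: finite_subset)
    then show ?thesis using finite_Q by (intro finite_cartesian_product finite_pair_lists)
  qed
  then have "card (run_data n k l) = (\<Sum>B\<in>Bs. card (pair_lists (>) l B \<times> Q B))"
    unfolding decomp using \<open>finite Bs\<close>
    by (intro card_UN_disjoint) (auto simp: pair_lists_def)
  also have "\<dots> = card Bs * (dfact_odd l * s (n - 3 * l - 1) (k - l))"
    using card_B by simp
  also have "card Bs = n - l - 2 choose (2 * l)"
    unfolding Bs_def using n_subsets[of "{l + 3..n}" "2 * l"] by simp
  finally show ?thesis by simp
qed

lemma card_run_clusters:
  assumes "1 \<le> l" "3 * l + 2 \<le> n"
  shows "card (run_clusters n k l) =
    (n - l - 2 choose (2 * l)) * dfact_odd l * s (n - 3 * l - 1) (k - l)"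
proof -
  have "run_clusters n k l = assemble_run ` run_data n k l"
    using run_clusters_subset_image[OF assms] assemble_run_mem_run_clusters[OF assms(2)] by blast
  then show ?thesis
    using card_image[OF inj_on_assemble_run] card_run_data[OF assms(2)] by simp
qed

lemma run_clusters_disjoint:
  assumes "l \<noteq> l'"
  shows "run_clusters n k l \<inter> run_clusters n k l' = {}"
proof -
  have "p \<notin> run_clusters n k l'" if p: "p \<in> run_clusters n k l" and "l < l'" for p l l'
  proof
    assume "p \<in> run_clusters n k l'"
    then have occ: "occ_at p (3 * l)" using \<open>l < l'\<close> by (simp add: run_clusters_def)
    have "length (drop (3 * l + 1) p) \<noteq> 1" using occ_at_length[OF occ] by simp
    then have "occ_at (drop (3 * l + 1) p) 0"
      using p occ_chain_occ_at_0 by (auto simp: run_clusters_def tail_chain_def)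
    then show False using not_occ_at_Suc[OF occ] by (simp add: occ_at_drop)
  qed
  then show ?thesis using assms by (meson disjoint_iff neq_iff)
qed

lemma clusters_eq_UN_run_clusters:
  "{p. is_cluster n k p} = (\<Union>l \<in> {l. 1 \<le> l \<and> l \<le> k \<and> 3 * l + 2 \<le> n}. run_clusters n k l)"
proof (intro equalityI subsetI)
  fix p assume "p \<in> {p. is_cluster n k p}"
  then have perm: "is_perm n p" and "occ_chain p k"
    by (simp_all add: is_cluster_iff is_cluster_word_iff_occ_chain)
  then obtain l where l: "1 \<le> l" "l \<le> k" "\<forall>j<l. occ_at p (3 * j)"
    "tail_chain (drop (3 * l + 1) p) (k - l)"
    using occ_chain_imp_run by blast
  have "3 * (l - 1) + 5 \<le> n" using occ_at_length[of p "3 * (l - 1)"] l perm by (simp add: is_perm_def)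
  then show "p \<in> (\<Union>l \<in> {l. 1 \<le> l \<and> l \<le> k \<and> 3 * l + 2 \<le> n}. run_clusters n k l)"
    using l perm by (auto simp: run_clusters_def)
next
  fix p assume "p \<in> (\<Union>l \<in> {l. 1 \<le> l \<and> l \<le> k \<and> 3 * l + 2 \<le> n}. run_clusters n k l)"
  then show "p \<in> {p. is_cluster n k p}"
    by (auto simp: run_clusters_def is_cluster_iff is_cluster_word_iff_occ_chain
        intro: run_imp_occ_chain)
qed

lemma card_clusters:
  "card {p. is_cluster n k p} = (\<Sum>l | 1 \<le> l \<and> l \<le> k \<and> 3 * l + 2 \<le> n.
     (n - l - 2 choose (2 * l)) * dfact_odd l * s (n - 3 * l - 1) (k - l))"
proof -
  have "finite {l. 1 \<le> l \<and> l \<le> k \<and> 3 * l + 2 \<le> n}" by simp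
  moreover have "finite (run_clusters n k l)" for l
    by (rule finite_subset[OF _ finite_lists_length_eq[of "{1..n}" n]])
      (auto simp: run_clusters_def is_perm_def)
  ultimately show ?thesis
    unfolding clusters_eq_UN_run_clusters
    using run_clusters_disjoint card_run_clusters
    by (subst card_UN_disjoint) (auto intro!: sum.cong)
qed

theorem theorem3p6:
  shows "(\<forall>n k. 5 \<le> n \<longrightarrow>
            s n k = (\<Sum>l \<in> {l. 5 \<le> 3 * l + 2 \<and> 3 * l + 2 \<le> n}.
                       (if l \<le> k then (n - l - 2 choose (2 * l)) * dfact_odd l
                                       * s (n - 3 * l - 1) (k - l)
                        else 0)))
       \<and> (\<forall>n k. n < 5 \<longrightarrow> s n k = (if n = 1 \<and> k = 0 then 1 else 0))"
proof (intro conjI allI impI)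
  fix n k :: nat
  assume "5 \<le> n"
  let ?L = "{l. 5 \<le> 3 * l + 2 \<and> 3 * l + 2 \<le> n}"
  have "finite ?L" by (rule finite_subset[of _ "{..n}"]) auto
  have "s n k = card {p. is_cluster n k p}" using \<open>5 \<le> n\<close> by (simp add: s_def)
  also have "\<dots> = (\<Sum>l \<in> {l \<in> ?L. l \<le> k}.
      (n - l - 2 choose (2 * l)) * dfact_odd l * s (n - 3 * l - 1) (k - l))"
    unfolding card_clusters by (intro sum.cong) auto
  finally show "s n k = (\<Sum>l \<in> ?L.
      (if l \<le> k then (n - l - 2 choose (2 * l)) * dfact_odd l * s (n - 3 * l - 1) (k - l) else 0))"
    by (simp only: sum.inter_filter[OF \<open>finite ?L\<close>])
next
  fix n k :: nat
  assume "n < 5"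
  then show "s n k = (if n = 1 \<and> k = 0 then 1 else 0)" by (simp add: s_def short_clusters_empty)
qed

end
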